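(* Let $X\in C^\infty(\mathbb T;\mathbb R)$ have at least one zero and assume all its zeroes are non-degenerate (i.e. $X(x_0)=0\Rightarrow X'(x_0)\neq0$). Let $h(x,\xi):=\xi X(x)$ on $T^*\mathbb T\simeq\mathbb T\times\mathbb R$. Then there exist a function $a\in C^\infty(T^*\mathbb T\setminus\{\xi=0\};\mathbb R)$, positively homogeneous of degree one, and $\delta>0$ such that $$\{h,a\}(x,\xi)\ge\delta|\xi|\qquad\forall (x,\xi)\in T^*\mathbb T,\ \xi\neq0,$$ and there exists a non-empty open set $\mathcal W\subset\mathbb T$ such that $a(x,\xi)\le-\frac{|\xi|}2$ for all $x\in\mathcal W$ and $\xi\neq0$.
   Context: $\mathbb T:=\mathbb R/2\pi\mathbb Z$. Poisson bracket: $\{h,f\}:=\partial_\xi h\,\partial_xf-\partial_xh\,\partial_\xi f$. A function $f$ on $T^*\mathbb T\setminus\{\xi=0\}$ is positively homogeneous of degree $\rho$ if $f(x,\lambda\xi)=\lambda^\rho f(x,\xi)$ for all $\lambda>0$. A function $a$ with the stated properties is called an escape function for $h$. *)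

theory Defs
  imports "HOL-Analysis.Analysis"
begin

text \<open>Functions on the circle T = R/2piZ are represented as 2pi-periodic functions on R;
functions on T*T (minus zero section) as functions of (x,xi) that are 2pi-periodic in x.\<close>

definition periodic2pi :: "(real \<Rightarrow> 'b) \<Rightarrow> bool" where
  "periodic2pi f \<longleftrightarrow> (\<forall>x. f (x + 2*pi) = f x)"

definition smooth1_on :: "real set \<Rightarrow> (real \<Rightarrow> real) \<Rightarrow> bool" where
  "smooth1_on S f \<longleftrightarrow> (\<exists>D :: nat \<Rightarrow> real \<Rightarrow> real. D 0 = f \<and>
     (\<forall>n. \<forall>x\<in>S. (D n has_field_derivative D (Suc n) x) (at x)))"

text \<open>D w is the partial derivative along the word w,
True = d/dx, False = d/dxi (applied from the right).\<close>
definition smooth2_on :: "(real \<times> real) set \<Rightarrow> (real \<Rightarrow> real \<Rightarrow> real) \<Rightarrow> bool" where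
  "smooth2_on U f \<longleftrightarrow> (\<exists>D :: bool list \<Rightarrow> real \<Rightarrow> real \<Rightarrow> real. D [] = f \<and>
     (\<forall>w. continuous_on U (\<lambda>(x,y). D w x y)) \<and>
     (\<forall>w. \<forall>(x,y)\<in>U.
        ((\<lambda>t. D w t y) has_field_derivative D (True # w) x y) (at x) \<and>
        ((\<lambda>t. D w x t) has_field_derivative D (False # w) x y) (at y)))"

definition poisson :: "(real \<Rightarrow> real \<Rightarrow> real) \<Rightarrow> (real \<Rightarrow> real \<Rightarrow> real) \<Rightarrow> real \<Rightarrow> real \<Rightarrow> real" where
  "poisson h f x \<xi> =
     deriv (\<lambda>\<eta>. h x \<eta>) \<xi> * deriv (\<lambda>y. f y \<xi>) x - deriv (\<lambda>y. h y \<xi>) x * deriv (\<lambda>\<eta>. f x \<eta>) \<xi>"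

definition pos_homogeneous :: "real \<Rightarrow> (real \<Rightarrow> real \<Rightarrow> real) \<Rightarrow> bool" where
  "pos_homogeneous \<rho> f \<longleftrightarrow> (\<forall>x \<xi> l. \<xi> \<noteq> 0 \<longrightarrow> l > 0 \<longrightarrow> f x (l * \<xi>) = l powr \<rho> * f x \<xi>)"

end

theory Submission
  imports Defs
begin

(*
  Take a(x, xi) = |xi| b(x); then {h, a} = |xi| (X b' - X' b), so it suffices to find a smooth
  periodic b with X b' - X' b >= delta that equals -1 somewhere. By non-degeneracy
  p = X'^2 - X X'' is positive at the zeros of X, hence p + K X^2 >= mu > 0 for K large.
  For b = -X' + K X (S + c) one has X b' - X' b = p + K X^2 S', so one needs a periodic S whose
  derivative is close to 1 wherever X is not small: S(x) = 2 arg(1 - r e^(i (x - x0))) has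
  S' = 1 - P_r(x - x0), P_r the Poisson kernel, and X^2 P_r(x - x0) = O(1 - r) because X(x0) = 0
  forces X^2 <= C (1 - cos (x - x0)). The constant c makes b(x1) = -1.
*)

section \<open>Smooth functions of one variable\<close>

lemma smooth1_on_UNIV_derivative:
  assumes "smooth1_on UNIV f"
  obtains f' where "\<And>x. (f has_field_derivative f' x) (at x)" "smooth1_on UNIV f'"
proof -
  from assms obtain D where "D 0 = f" and D: "\<And>n x. (D n has_field_derivative D (Suc n) x) (at x)"
    unfolding smooth1_on_def by blast
  moreover have "smooth1_on UNIV (D 1)"
    unfolding smooth1_on_def by (rule exI[of _ "\<lambda>n. D (Suc n)"]) (simp add: D)
  ultimately show ?thesis using that by (metis One_nat_def)
qed

lemma smooth1_on_UNIV_imp_continuous_on: "smooth1_on UNIV f \<Longrightarrow> continuous_on UNIV f"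
  by (meson smooth1_on_UNIV_derivative DERIV_isCont continuous_at_imp_continuous_on)

lemma smooth1_on_UNIV_coinduct:
  assumes "P f"
    and step: "\<And>g. P g \<Longrightarrow> \<exists>g'. (\<forall>x. (g has_field_derivative g' x) (at x)) \<and> P g'"
  shows "smooth1_on UNIV f"
proof -
  obtain N where N: "\<And>g. P g \<Longrightarrow> (\<forall>x. (g has_field_derivative N g x) (at x)) \<and> P (N g)"
    using step by metis
  have "P ((N ^^ n) f)" for n
    by (induction n) (simp_all add: assms(1) N)
  then show ?thesis
    unfolding smooth1_on_def by (intro exI[of _ "\<lambda>n. (N ^^ n) f"]) (simp add: N)
qed

inductive smooth_closure :: "(real \<Rightarrow> real) \<Rightarrow> bool" where
  const: "smooth_closure (\<lambda>x. c)"
| ident: "smooth_closure (\<lambda>x. x)"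
| uminus: "smooth_closure f \<Longrightarrow> smooth_closure (\<lambda>x. - f x)"
| add: "smooth_closure f \<Longrightarrow> smooth_closure g \<Longrightarrow> smooth_closure (\<lambda>x. f x + g x)"
| mult: "smooth_closure f \<Longrightarrow> smooth_closure g \<Longrightarrow> smooth_closure (\<lambda>x. f x * g x)"
| inverse: "smooth_closure f \<Longrightarrow> (\<And>x. f x \<noteq> 0) \<Longrightarrow> smooth_closure (\<lambda>x. inverse (f x))"
| sin: "smooth_closure f \<Longrightarrow> smooth_closure (\<lambda>x. sin (f x))"
| cos: "smooth_closure f \<Longrightarrow> smooth_closure (\<lambda>x. cos (f x))"
| arctan: "smooth_closure f \<Longrightarrow> smooth_closure (\<lambda>x. arctan (f x))"
| smooth: "smooth1_on UNIV f \<Longrightarrow> smooth_closure f"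

(* The rule smooth is left out: as an introduction rule it applies to every goal. *)
lemmas smooth_closure_intros = smooth_closure.intros(1-9)

lemma smooth_closure_has_derivative:
  assumes "smooth_closure f"
  shows "\<exists>f'. (\<forall>x. (f has_field_derivative f' x) (at x)) \<and> smooth_closure f'"
  using assms
proof induction
  case (const c)
  show ?case by (intro exI[of _ "\<lambda>x. 0"] conjI allI DERIV_const smooth_closure_intros)
next
  case ident
  show ?case by (intro exI[of _ "\<lambda>x. 1"] conjI allI DERIV_ident smooth_closure_intros)
next
  case (uminus f)
  then obtain f' where f': "\<forall>x. (f has_field_derivative f' x) (at x)" "smooth_closure f'" by blast
  show ?case
    by (intro exI[of _ "\<lambda>x. - f' x"] conjI allI DERIV_minus smooth_closure_intros f'[rule_format])
next
  case (add f g)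
  then obtain f' g' where f': "\<forall>x. (f has_field_derivative f' x) (at x)" "smooth_closure f'"
    and g': "\<forall>x. (g has_field_derivative g' x) (at x)" "smooth_closure g'" by blast
  show ?case
    by (intro exI[of _ "\<lambda>x. f' x + g' x"] conjI allI DERIV_add smooth_closure_intros
        f'[rule_format] g'[rule_format])
next
  case (mult f g)
  then obtain f' g' where f': "\<forall>x. (f has_field_derivative f' x) (at x)" "smooth_closure f'"
    and g': "\<forall>x. (g has_field_derivative g' x) (at x)" "smooth_closure g'" by blast
  show ?case
    by (intro exI[of _ "\<lambda>x. f' x * g x + g' x * f x"] conjI allI DERIV_mult smooth_closure_intros
        f'[rule_format] g'[rule_format] mult.hyps)
next
  case (inverse f)
  then obtain f' where f': "\<forall>x. (f has_field_derivative f' x) (at x)" "smooth_closure f'" by blast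
  show ?case
    by (intro exI[of _ "\<lambda>x. - (inverse (f x) * f' x * inverse (f x))"] conjI allI DERIV_inverse'
        smooth_closure_intros f'[rule_format] inverse.hyps)
next
  case (sin f)
  then obtain f' where f': "\<forall>x. (f has_field_derivative f' x) (at x)" "smooth_closure f'" by blast
  show ?case
    by (intro exI[of _ "\<lambda>x. cos (f x) * f' x"] conjI allI DERIV_fun_sin smooth_closure_intros
        f'[rule_format] sin.hyps)
next
  case (cos f)
  then obtain f' where f': "\<forall>x. (f has_field_derivative f' x) (at x)" "smooth_closure f'" by blast
  show ?case
    by (intro exI[of _ "\<lambda>x. - sin (f x) * f' x"] conjI allI DERIV_fun_cos smooth_closure_intros
        f'[rule_format] cos.hyps)
next
  case (arctan f)
  then obtain f' where f': "\<forall>x. (f has_field_derivative f' x) (at x)" "smooth_closure f'" by blast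
  have "1 + f x * f x \<noteq> 0" for x
    using zero_le_square[of "f x"] by linarith
  then have "smooth_closure (\<lambda>x. inverse (1 + f x * f x) * f' x)"
    by (intro smooth_closure_intros f' arctan.hyps)
  moreover have "((\<lambda>x. arctan (f x)) has_field_derivative inverse (1 + f x * f x) * f' x) (at x)" for x
    using DERIV_chain2[OF DERIV_arctan, of f "f' x" x] f' by (simp add: power2_eq_square)
  ultimately show ?case by (intro exI conjI allI) assumption+
next
  case (smooth f)
  then show ?case
    by (metis smooth1_on_UNIV_derivative smooth_closure.smooth)
qed

lemma smooth_closure_imp_smooth1_on: "smooth_closure f \<Longrightarrow> smooth1_on UNIV f"
  by (rule smooth1_on_UNIV_coinduct[where P = smooth_closure])
     (auto dest: smooth_closure_has_derivative)

section \<open>Symbols on the cotangent bundle\<close>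

lemma has_field_derivative_abs_sgn:
  fixes y :: real
  assumes "y \<noteq> 0"
  shows "(abs has_field_derivative sgn y) (at y)" "(sgn has_field_derivative 0) (at y)"
proof -
  define S where "S = {x::real. 0 < x * y}"
  have S_open: "open S"
    unfolding S_def by (intro open_Collect_less continuous_intros)
  have y_in_S: "y \<in> S"
    using assms by (cases "y > 0") (auto simp: S_def zero_less_mult_iff)
  have "sgn y * x = \<bar>x\<bar>" "sgn y = sgn x" if "x \<in> S" for x
    using that unfolding S_def by (auto simp: zero_less_mult_iff)
  then show "(abs has_field_derivative sgn y) (at y)" "(sgn has_field_derivative 0) (at y)"
    by (auto intro: has_field_derivative_transform_within_open[OF DERIV_cmult_Id S_open y_in_S]
        has_field_derivative_transform_within_open[OF DERIV_const S_open y_in_S])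
qed

lemma smooth1_on_abs: "smooth1_on (-{0}) (abs :: real \<Rightarrow> real)"
  unfolding smooth1_on_def
proof (intro exI[of _ "\<lambda>n. if n = 0 then abs else if n = 1 then sgn else (\<lambda>_. 0)"] conjI allI ballI)
  fix n and y :: real
  assume "y \<in> -{0}"
  then show "((if n = 0 then abs else if n = 1 then sgn else (\<lambda>_. 0)) has_field_derivative
      (if Suc n = 0 then abs else if Suc n = 1 then sgn else (\<lambda>_. 0)) y) (at y)"
    using has_field_derivative_abs_sgn[of y] by auto
qed simp

lemma smooth2_on_mult:
  assumes "smooth1_on U b" "smooth1_on V g"
  shows "smooth2_on (U \<times> V) (\<lambda>x \<xi>. g \<xi> * b x)"
proof -
  obtain B where B: "B 0 = b" "\<And>n x. x \<in> U \<Longrightarrow> (B n has_field_derivative B (Suc n) x) (at x)"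
    using assms(1) unfolding smooth1_on_def by blast
  obtain G where G: "G 0 = g" "\<And>n y. y \<in> V \<Longrightarrow> (G n has_field_derivative G (Suc n) y) (at y)"
    using assms(2) unfolding smooth1_on_def by blast
  have cont: "continuous_on U (B n)" "continuous_on V (G n)" for n
    using B(2) G(2) by (meson DERIV_isCont continuous_at_imp_continuous_on)+
  define E where "E w x y = G (length (filter Not w)) y * B (length (filter id w)) x" for w x y
  show ?thesis
    unfolding smooth2_on_def
  proof (intro exI[of _ E] conjI allI ballI)
    show "E [] = (\<lambda>x \<xi>. g \<xi> * b x)"
      by (intro ext) (simp add: E_def B(1) G(1))
  next
    fix w
    have "continuous_on (U \<times> V)
        (\<lambda>z. G (length (filter Not w)) (snd z) * B (length (filter id w)) (fst z))"
      by (intro continuous_intros continuous_on_compose2[OF cont(2)] continuous_on_compose2[OF cont(1)])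
         auto
    then show "continuous_on (U \<times> V) (\<lambda>(x, y). E w x y)"
      by (simp add: E_def case_prod_beta)
  next
    fix w z
    assume "z \<in> U \<times> V"
    then show "case z of (x, y) \<Rightarrow>
        ((\<lambda>t. E w t y) has_field_derivative E (True # w) x y) (at x) \<and>
        ((\<lambda>t. E w x t) has_field_derivative E (False # w) x y) (at y)"
      unfolding E_def using B(2) G(2) by (auto intro!: DERIV_cmult DERIV_cmult_right)
  qed
qed

lemma poisson_linear_abs:
  assumes "X field_differentiable (at x)" "(b has_field_derivative B) (at x)" "\<xi> \<noteq> 0"
  shows "poisson (\<lambda>x \<xi>. \<xi> * X x) (\<lambda>x \<xi>. \<bar>\<xi>\<bar> * b x) x \<xi>
    = \<bar>\<xi>\<bar> * (X x * B - deriv X x * b x)"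
proof -
  have "deriv (\<lambda>\<eta>. \<eta> * X x) \<xi> = X x"
    by (rule DERIV_imp_deriv) (auto intro!: derivative_eq_intros)
  moreover have "deriv (\<lambda>y. \<bar>\<xi>\<bar> * b y) x = \<bar>\<xi>\<bar> * B"
    by (rule DERIV_imp_deriv) (rule DERIV_cmult[OF assms(2)])
  moreover have "deriv (\<lambda>y. \<xi> * X y) x = \<xi> * deriv X x"
    using assms(1) by (intro DERIV_imp_deriv DERIV_cmult) (simp add: DERIV_deriv_iff_field_differentiable)
  moreover have "deriv (\<lambda>\<eta>. \<bar>\<eta>\<bar> * b x) \<xi> = sgn \<xi> * b x"
    by (rule DERIV_imp_deriv) (rule DERIV_cmult_right[OF has_field_derivative_abs_sgn(1)[OF assms(3)]])
  ultimately show ?thesis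
    unfolding poisson_def by (simp add: algebra_simps sgn_if)
qed

section \<open>Periodic functions\<close>

lemma periodic2pi_shift_int:
  assumes "periodic2pi f"
  shows "f (x + 2*pi * of_int k) = f x"
proof -
  have nat_shift: "f (y + 2*pi * real n) = f y" for y n
  proof (induction n)
    case (Suc n)
    have "f (y + 2*pi * real (Suc n)) = f ((y + 2*pi * real n) + 2*pi)"
      by (simp add: algebra_simps)
    with Suc assms show ?case by (simp add: periodic2pi_def)
  qed simp
  show ?thesis
  proof (cases "k \<ge> 0")
    case True
    then show ?thesis using nat_shift[of x "nat k"] by simp
  next
    case False
    then show ?thesis using nat_shift[of "x + 2*pi * of_int k" "nat (- k)"] by simp
  qed
qed

lemma exists_int_multiple_2pi_near: "\<exists>k::int. \<bar>x - 2*pi * of_int k\<bar> \<le> pi"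
proof
  define k where "k = \<lfloor>x / (2*pi) + 1/2\<rfloor>"
  have "of_int k \<le> x / (2*pi) + 1/2" "x / (2*pi) + 1/2 < of_int k + 1"
    unfolding k_def by linarith+
  then have "2*pi * of_int k \<le> x + pi" "x + pi < 2*pi * of_int k + 2*pi"
    by (simp_all add: field_simps)
  then show "\<bar>x - 2*pi * of_int k\<bar> \<le> pi" by linarith
qed

lemma periodic2pi_range: "periodic2pi f \<Longrightarrow> range f = f ` {-pi..pi}"
proof (intro equalityI subsetI)
  fix y assume "periodic2pi f" "y \<in> range f"
  then obtain x where "y = f x" by blast
  moreover obtain k where "\<bar>x - 2*pi * of_int k\<bar> \<le> pi"
    using exists_int_multiple_2pi_near by blast
  moreover have "f (x - 2*pi * of_int k) = f x"
    using periodic2pi_shift_int[OF \<open>periodic2pi f\<close>, of "x - 2*pi * of_int k" k] by simp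
  ultimately show "y \<in> f ` {-pi..pi}" by (metis abs_le_iff atLeastAtMost_iff image_eqI minus_le_iff)
qed auto

lemma periodic2pi_compact_range:
  assumes "periodic2pi f" "continuous_on UNIV f"
  shows "compact (range f)"
  unfolding periodic2pi_range[OF assms(1)]
  by (rule compact_continuous_image) (auto intro: continuous_on_subset[OF assms(2)])

lemma periodic2pi_bounded:
  fixes f :: "real \<Rightarrow> real"
  assumes "periodic2pi f" "continuous_on UNIV f"
  obtains M where "\<And>x. \<bar>f x\<bar> \<le> M"
  using compact_imp_bounded[OF periodic2pi_compact_range[OF assms]]
  by (metis bounded_real rangeI)

lemma periodic2pi_positive_lower_bound:
  fixes f :: "real \<Rightarrow> real"
  assumes "periodic2pi f" "continuous_on UNIV f" "\<And>x. f x > 0"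
  obtains \<mu> where "\<mu> > 0" "\<And>x. \<mu> \<le> f x"
proof -
  obtain m where "m \<in> range f" "\<And>y. y \<in> range f \<Longrightarrow> m \<le> y"
    using compact_attains_inf[OF periodic2pi_compact_range[OF assms(1,2)]] by blast
  with assms(3) show ?thesis using that by blast
qed

lemma periodic2pi_derivative:
  assumes "periodic2pi f" and f': "\<And>x. (f has_field_derivative f' x) (at x)"
  shows "periodic2pi f'"
  unfolding periodic2pi_def
proof
  fix x
  have "(f has_field_derivative f' (x + 2*pi)) (at x)"
    using DERIV_shift[THEN iffD1, OF f'[of "x + 2*pi"]] assms(1) by (simp add: periodic2pi_def)
  then show "f' (x + 2*pi) = f' x"
    using f' DERIV_unique by blast
qed

lemma smooth1_on_UNIV_periodic2pi_derivative:
  assumes "smooth1_on UNIV f" "periodic2pi f"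
  obtains f' where "\<And>x. (f has_field_derivative f' x) (at x)" "smooth1_on UNIV f'" "periodic2pi f'"
  by (metis assms smooth1_on_UNIV_derivative periodic2pi_derivative)

lemma periodic2pi_exists_dominating_multiple:
  fixes p q :: "real \<Rightarrow> real"
  assumes "periodic2pi p" "periodic2pi q" "continuous_on UNIV p" "continuous_on UNIV q"
    and "\<And>x. 0 \<le> q x" and "\<And>x. q x = 0 \<Longrightarrow> 0 < p x"
  obtains \<mu> K where "0 < \<mu>" "0 < K" "\<And>x. \<mu> \<le> p x + K * q x"
proof -
  have "periodic2pi (\<lambda>x. max (p x) (q x))"
    using assms(1,2) by (simp add: periodic2pi_def)
  moreover have "continuous_on UNIV (\<lambda>x. max (p x) (q x))"
    using assms(3,4) by (intro continuous_intros)
  moreover have "0 < max (p x) (q x)" for x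
    using assms(5,6)[of x] by (cases "q x = 0") (auto simp: less_max_iff_disj)
  ultimately obtain \<mu> where \<mu>: "0 < \<mu>" "\<And>x. \<mu> \<le> max (p x) (q x)"
    using periodic2pi_positive_lower_bound by blast
  obtain P where P: "\<And>x. \<bar>p x\<bar> \<le> P"
    using periodic2pi_bounded[OF assms(1,3)] by blast
  define K where "K = (P + \<mu>) / \<mu>"
  have "0 \<le> P" using P[of 0] by linarith
  then have K: "0 < K" "K * \<mu> = P + \<mu>"
    using \<mu>(1) by (simp_all add: K_def)
  have "\<mu> \<le> p x + K * q x" for x
  proof (cases "\<mu> \<le> p x")
    case True
    then show ?thesis using mult_nonneg_nonneg[OF less_imp_le[OF K(1)] assms(5)[of x]] by linarith
  next
    case False
    then have "\<mu> \<le> q x" using \<mu>(2)[of x] by linarith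
    then have "K * \<mu> \<le> K * q x" using K(1) by simp
    then show ?thesis using K(2) P[of x] by linarith
  qed
  with \<mu>(1) K(1) that show ?thesis by blast
qed

lemma sq_le_18_one_minus_cos:
  fixes y :: real
  assumes "\<bar>y\<bar> \<le> pi"
  shows "y^2 \<le> 18 * (1 - cos y)"
proof -
  define t where "t = \<bar>y\<bar> / 2"
  have t: "0 \<le> t" "t \<le> 2" using assms pi_less_4 by (auto simp: t_def)
  have "\<bar>sin t - (\<Sum>m<3. sin_coeff m * t ^ m)\<bar> \<le> inverse (fact 3) * \<bar>t\<bar> ^ 3"
    by (rule Maclaurin_sin_bound)
  then have "\<bar>sin t - t\<bar> \<le> t^3 / 6"
    using t by (simp add: numeral_3_eq_3 sin_coeff_def fact_numeral)
  then have "t - sin t \<le> t^3 / 6" by (metis abs_le_D2 minus_diff_eq)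
  moreover have "t * t \<le> 2 * 2" using t by (intro mult_mono) auto
  then have "t^3 \<le> 4 * t" using mult_left_mono[of "t * t" 4 t] t by (simp add: power3_eq_cube mult_ac)
  ultimately have "t / 3 \<le> sin t" by linarith
  then have "(t / 3)^2 \<le> (sin t)^2" using t by (intro power_mono) auto
  moreover have "1 - cos y = 2 * (sin t)^2"
    using cos_double_sin[of t] by (simp add: t_def)
  moreover have "y^2 = 4 * t^2"
    by (simp add: t_def power_divide)
  ultimately show ?thesis by (simp add: power_divide)
qed

lemma periodic2pi_sq_le_one_minus_cos:
  fixes f :: "real \<Rightarrow> real"
  assumes "periodic2pi f" and f': "\<And>x. (f has_field_derivative f' x) (at x)"
    and "\<And>x. \<bar>f' x\<bar> \<le> L" and "f x0 = 0"
  shows "(f x)^2 \<le> 18 * L^2 * (1 - cos (x - x0))"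
proof -
  obtain k where "\<bar>x - x0 - 2*pi * of_int k\<bar> \<le> pi"
    using exists_int_multiple_2pi_near by blast
  moreover define y where "y = x - x0 - 2*pi * of_int k"
  ultimately have y: "\<bar>y\<bar> \<le> pi" by simp
  have "f x = f (x0 + y)"
    using periodic2pi_shift_int[OF assms(1), of "x0 + y" k] by (simp add: y_def)
  moreover have "cos (x - x0) = cos y"
    using periodic2pi_shift_int[of cos y k] by (simp add: y_def periodic2pi_def)
  moreover have "\<bar>f (x0 + y) - f x0\<bar> \<le> L * \<bar>(x0 + y) - x0\<bar>"
    using field_differentiable_bound[OF convex_UNIV, of f f' L "x0 + y" x0] f' assms(3) by simp
  ultimately have "\<bar>f x\<bar> \<le> L * \<bar>y\<bar>" "cos (x - x0) = cos y" using assms(4) by simp_all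
  then have "(f x)^2 \<le> L^2 * y^2"
    by (metis abs_ge_zero power2_abs power_mono power_mult_distrib)
  also have "\<dots> \<le> L^2 * (18 * (1 - cos (x - x0)))"
    using sq_le_18_one_minus_cos[OF y] \<open>cos (x - x0) = cos y\<close> by (simp add: mult_left_mono)
  finally show ?thesis by (simp add: algebra_simps)
qed

section \<open>The Poisson kernel\<close>

definition poisson_kernel :: "real \<Rightarrow> real \<Rightarrow> real" where
  "poisson_kernel r y = (1 - r^2) / (1 - 2*r*cos y + r^2)"

(* 2 arg (1 - r e^(i y)) for |r| < 1 *)
definition poisson_phase :: "real \<Rightarrow> real \<Rightarrow> real" where
  "poisson_phase r y = -2 * arctan (r * sin y / (1 - r * cos y))"

lemma one_minus_mult_cos_pos: "\<bar>r\<bar> < 1 \<Longrightarrow> 0 < 1 - r * cos (y :: real)"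
  using abs_ge_self[of "r * cos y"] abs_mult[of r "cos y"]
    mult_left_le[OF abs_cos_le_one abs_ge_zero, of r y] by linarith

lemma poisson_kernel_denominator:
  fixes r y :: real
  shows "1 - 2*r*cos y + r^2 = (1 - r * cos y)^2 + (r * sin y)^2"
  using sin_cos_squared_add[of y] by algebra

lemma poisson_kernel_denominator_pos: "\<bar>r\<bar> < 1 \<Longrightarrow> 0 < 1 - 2*r*cos (y :: real) + r^2"
  unfolding poisson_kernel_denominator
  by (intro add_pos_nonneg zero_less_power one_minus_mult_cos_pos) simp_all

lemma poisson_kernel_nonneg: "\<bar>r\<bar> < 1 \<Longrightarrow> 0 \<le> poisson_kernel r y"
  unfolding poisson_kernel_def
  by (simp add: poisson_kernel_denominator_pos abs_square_le_1 less_imp_le)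

lemma one_minus_cos_mult_poisson_kernel_le:
  assumes "1/2 \<le> r" "r < 1"
  shows "(1 - cos y) * poisson_kernel r y \<le> 2 * (1 - r)"
proof -
  define D where "D = 1 - 2*r*cos y + r^2"
  have "D = (1 - r)^2 + 2*r*(1 - cos y)"
    unfolding D_def by (simp add: power2_eq_square algebra_simps)
  moreover have "1 - cos y \<le> 2*r*(1 - cos y)"
    using assms(1) by (simp add: mult_right_mono[of 1 "2*r" "1 - cos y", simplified])
  moreover have "0 < (1 - r)^2" using assms by simp
  moreover have "0 \<le> 2*r*(1 - cos y)" using assms by simp
  ultimately have "1 - cos y \<le> D" "0 < D" by linarith+
  moreover have "0 \<le> 1 - r^2" using assms by (simp add: power_le_one)
  ultimately have "(1 - cos y) * (1 - r^2) \<le> D * (1 - r^2)" "0 < D"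
    by (auto intro: mult_right_mono)
  then have "(1 - cos y) * (1 - r^2) / D \<le> 1 - r^2"
    by (simp add: divide_le_eq mult.commute)
  also have "\<dots> \<le> 2 * (1 - r)"
    using zero_le_power2[of "1 - r"] by (simp add: power2_eq_square algebra_simps)
  finally show ?thesis unfolding poisson_kernel_def D_def by simp
qed

lemma poisson_phase_has_derivative:
  assumes "\<bar>r\<bar> < 1"
  shows "(poisson_phase r has_field_derivative 1 - poisson_kernel r y) (at y)"
proof -
  define q where "q = 1 - r * cos y"
  define D where "D = 1 - 2*r*cos y + r^2"
  have q: "0 < q"
    unfolding q_def by (rule one_minus_mult_cos_pos[OF assms])
  have D: "0 < D"
    unfolding D_def by (rule poisson_kernel_denominator_pos[OF assms])
  have du: "((\<lambda>y. r * sin y / (1 - r * cos y)) has_field_derivative (r * cos y - r^2) / q^2) (at y)"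
  proof -
    have "r * cos y * q - r * sin y * (r * sin y) = r * cos y - r^2"
      unfolding q_def using sin_cos_squared_add[of y] by algebra
    then show ?thesis
      using q unfolding q_def by (auto intro!: derivative_eq_intros simp: power2_eq_square mult_ac)
  qed
  then have "(poisson_phase r has_field_derivative
      -2 * (inverse (1 + (r * sin y / q)^2) * ((r * cos y - r^2) / q^2))) (at y)"
    unfolding poisson_phase_def[abs_def]
    using DERIV_cmult[OF DERIV_chain2[OF DERIV_arctan du], of "-2"] by (simp add: q_def)
  moreover have "1 + (r * sin y / q)^2 = D / q^2"
    using q unfolding D_def q_def poisson_kernel_denominator by (simp add: field_simps)
  moreover have "-2 * (inverse (D / q^2) * ((r * cos y - r^2) / q^2)) = 2 * (r^2 - r * cos y) / D"
    using q D by (simp add: field_simps)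
  moreover have "2 * (r^2 - r * cos y) / D = 1 - poisson_kernel r y"
    using D unfolding poisson_kernel_def by (simp add: field_simps D_def)
  ultimately show ?thesis by metis
qed

lemma smooth1_on_poisson_phase:
  assumes "\<bar>r\<bar> < 1"
  shows "smooth1_on UNIV (\<lambda>x. poisson_phase r (x - x0))"
proof -
  have "1 + - r * cos (x + - x0) \<noteq> 0" for x
    using one_minus_mult_cos_pos[OF assms, of "x + - x0"] by simp
  then have "smooth_closure
      (\<lambda>x. - 2 * arctan (r * sin (x + - x0) * inverse (1 + - r * cos (x + - x0))))"
    by (intro smooth_closure_intros)
  then show ?thesis
    unfolding poisson_phase_def by (simp add: divide_inverse smooth_closure_imp_smooth1_on)
qed

lemma periodic2pi_poisson_phase: "periodic2pi (\<lambda>x. poisson_phase r (x - x0))"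
proof -
  have "x + 2*pi - x0 = (x - x0) + 2*pi" for x by simp
  then show ?thesis unfolding periodic2pi_def poisson_phase_def by (simp only:) simp
qed

lemma exists_periodic_phase_correction:
  fixes f :: "real \<Rightarrow> real"
  assumes "periodic2pi f" and "\<And>x. (f has_field_derivative f' x) (at x)"
    and "\<And>x. \<bar>f' x\<bar> \<le> L" and "f x0 = 0" and "0 < \<epsilon>"
  obtains S S' where "smooth1_on UNIV S" "periodic2pi S"
    "\<And>x. (S has_field_derivative S' x) (at x)" "\<And>x. (f x)^2 * (1 - S' x) \<le> \<epsilon>"
proof -
  define C where "C = 18 * L^2"
  define e where "e = min (1/2) (\<epsilon> / (2*C + 1))"
  define r where "r = 1 - e"
  have C: "0 \<le> C" unfolding C_def by simp
  have "0 < e" "e \<le> 1/2" "e \<le> \<epsilon> / (2*C + 1)"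
    using assms(5) C unfolding e_def by (simp_all only: min.cobounded1 min.cobounded2) simp
  then have e: "0 < e" "e \<le> 1/2" "e * (2*C + 1) \<le> \<epsilon>"
    using C by (simp_all add: le_divide_eq)
  then have r: "1/2 \<le> r" "r < 1" "\<bar>r\<bar> < 1" unfolding r_def by auto
  define S' where "S' x = 1 - poisson_kernel r (x - x0)" for x
  have "((\<lambda>x. poisson_phase r (x - x0)) has_field_derivative S' x) (at x)" for x
    using DERIV_chain2[OF poisson_phase_has_derivative[OF r(3)], of "\<lambda>x. x - x0" 1 x]
    by (simp add: S'_def DERIV_diff[OF DERIV_ident DERIV_const, simplified])
  moreover have "(f x)^2 * (1 - S' x) \<le> \<epsilon>" for x
  proof -
    have "(f x)^2 * (1 - S' x) \<le> C * (1 - cos (x - x0)) * poisson_kernel r (x - x0)"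
      unfolding S'_def C_def
      using periodic2pi_sq_le_one_minus_cos[OF assms(1-4)] poisson_kernel_nonneg[OF r(3)]
      by (simp add: mult_right_mono)
    also have "\<dots> \<le> C * (2 * (1 - r))"
      using one_minus_cos_mult_poisson_kernel_le[OF r(1,2)] C
      by (simp add: mult.assoc mult_left_mono)
    also have "\<dots> \<le> \<epsilon>"
      using e C unfolding r_def by (simp add: algebra_simps)
    finally show ?thesis .
  qed
  ultimately show ?thesis
    using that smooth1_on_poisson_phase[OF r(3)] periodic2pi_poisson_phase by blast
qed

section \<open>The escape function\<close>

lemma escape_profile_wronskian:
  fixes X X' X'' S S' b b' :: "real \<Rightarrow> real"
  assumes X': "\<And>x. (X has_field_derivative X' x) (at x)"
    and X'': "\<And>x. (X' has_field_derivative X'' x) (at x)"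
    and S: "\<And>x. (S has_field_derivative S' x) (at x)"
    and "0 < K" and \<mu>: "\<And>x. \<mu> \<le> (X' x)^2 - X x * X'' x + K * (X x)^2"
    and S'_bound: "\<And>x. (X x)^2 * (1 - S' x) \<le> \<mu> / (2 * K)"
    and b_def: "\<And>x. b x = - X' x + K * X x * (S x + c)"
    and b'_def: "\<And>x. b' x = - X'' x + K * (X' x * (S x + c) + X x * S' x)"
  shows "(b has_field_derivative b' x) (at x)" "\<mu> / 2 \<le> X x * b' x - X' x * b x"
proof -
  show "(b has_field_derivative b' x) (at x)"
    unfolding b_def[abs_def] b'_def using X' X'' S
    by (auto intro!: derivative_eq_intros simp: algebra_simps)
  have "X x * b' x - X' x * b x
      = (X' x)^2 - X x * X'' x + K * (X x)^2 - K * ((X x)^2 * (1 - S' x))"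
    unfolding b_def b'_def by (simp add: algebra_simps power2_eq_square)
  moreover have "K * ((X x)^2 * (1 - S' x)) \<le> \<mu> / 2"
    using mult_left_mono[OF S'_bound[of x], of K] \<open>0 < K\<close> by simp
  ultimately show "\<mu> / 2 \<le> X x * b' x - X' x * b x"
    using \<mu>[of x] by linarith
qed

lemma exists_escape_profile:
  fixes X :: "real \<Rightarrow> real"
  assumes X: "smooth1_on UNIV X" "periodic2pi X"
    and "X x0 = 0" and nondeg: "\<And>x. X x = 0 \<Longrightarrow> deriv X x \<noteq> 0" and "X x1 \<noteq> 0"
  obtains b b' \<delta> where "smooth1_on UNIV b" "periodic2pi b" "\<And>x. (b has_field_derivative b' x) (at x)"
    "0 < \<delta>" "\<And>x. \<delta> \<le> X x * b' x - deriv X x * b x" "b x1 = -1"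
proof -
  obtain X' where X': "\<And>x. (X has_field_derivative X' x) (at x)" "smooth1_on UNIV X'" "periodic2pi X'"
    using smooth1_on_UNIV_periodic2pi_derivative[OF X] by blast
  obtain X'' where X'': "\<And>x. (X' has_field_derivative X'' x) (at x)" "smooth1_on UNIV X''" "periodic2pi X''"
    using smooth1_on_UNIV_periodic2pi_derivative[OF X'(2,3)] by blast
  have deriv_X: "deriv X x = X' x" for x
    using X'(1) by (rule DERIV_imp_deriv)
  obtain \<mu> K where \<mu>K: "0 < \<mu>" "0 < K" "\<And>x. \<mu> \<le> (X' x)^2 - X x * X'' x + K * (X x)^2"
  proof (rule periodic2pi_exists_dominating_multiple[of "\<lambda>x. (X' x)^2 - X x * X'' x" "\<lambda>x. (X x)^2"])
    show "periodic2pi (\<lambda>x. (X' x)^2 - X x * X'' x)" "periodic2pi (\<lambda>x. (X x)^2)"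
      using X(2) X'(3) X''(3) unfolding periodic2pi_def by simp_all
    have cont: "continuous_on UNIV X" "continuous_on UNIV X'" "continuous_on UNIV X''"
      using X(1) X'(2) X''(2) by (simp_all add: smooth1_on_UNIV_imp_continuous_on)
    show "continuous_on UNIV (\<lambda>x. (X' x)^2 - X x * X'' x)"
      using cont by (intro continuous_intros)
    show "continuous_on UNIV (\<lambda>x. (X x)^2)"
      using cont by (intro continuous_intros)
    show "(X x)^2 = 0 \<Longrightarrow> 0 < (X' x)^2 - X x * X'' x" for x
      using nondeg[of x] unfolding deriv_X by simp
  qed auto
  obtain L where "\<And>x. \<bar>X' x\<bar> \<le> L"
    using periodic2pi_bounded[OF X'(3) smooth1_on_UNIV_imp_continuous_on[OF X'(2)]] by blast
  then obtain S S' where S: "smooth1_on UNIV S" "periodic2pi S" "\<And>x. (S has_field_derivative S' x) (at x)"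
    and S'_bound: "\<And>x. (X x)^2 * (1 - S' x) \<le> \<mu> / (2 * K)"
    using exists_periodic_phase_correction[OF X(2) X'(1) _ \<open>X x0 = 0\<close>, of L "\<mu> / (2 * K)"] \<mu>K
    by auto
  define c where "c = (X' x1 - 1) / (K * X x1) - S x1"
  define b where "b x = - X' x + K * X x * (S x + c)" for x
  define b' where "b' x = - X'' x + K * (X' x * (S x + c) + X x * S' x)" for x
  note wronskian = escape_profile_wronskian[OF X'(1) X''(1) S(3) \<mu>K(2,3) S'_bound b_def b'_def]
  have "smooth_closure b"
    unfolding b_def[abs_def] using X(1) X'(2) S(1)
    by (intro smooth_closure_intros smooth_closure.smooth)
  moreover have "periodic2pi b"
    using X(2) X'(3) S(2) unfolding b_def periodic2pi_def by simp
  moreover have "b x1 = -1"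
    using \<open>X x1 \<noteq> 0\<close> \<mu>K(2) unfolding b_def c_def by (simp add: field_simps)
  ultimately show ?thesis
    using that[of b b' "\<mu> / 2"] wronskian \<mu>K(1) smooth_closure_imp_smooth1_on
    unfolding deriv_X by simp
qed

lemma escape_function_abs_mult:
  fixes X b b' :: "real \<Rightarrow> real"
  assumes a_def: "\<And>x \<xi>. a x \<xi> = \<bar>\<xi>\<bar> * b x"
    and X: "\<And>x. X field_differentiable (at x)"
    and b: "smooth1_on UNIV b" "periodic2pi b" "\<And>x. (b has_field_derivative b' x) (at x)"
    and \<delta>: "\<And>x. \<delta> \<le> X x * b' x - deriv X x * b x"
  shows "smooth2_on {(x, \<xi>). \<xi> \<noteq> 0} a" "\<forall>\<xi>. periodic2pi (\<lambda>x. a x \<xi>)" "pos_homogeneous 1 a"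
    and "\<forall>x \<xi>. \<xi> \<noteq> 0 \<longrightarrow> poisson (\<lambda>x \<xi>. \<xi> * X x) a x \<xi> \<ge> \<delta> * \<bar>\<xi>\<bar>"
    and "\<forall>x \<xi>. b x \<le> -1/2 \<longrightarrow> a x \<xi> \<le> - \<bar>\<xi>\<bar> / 2"
proof -
  have a: "a = (\<lambda>x \<xi>. \<bar>\<xi>\<bar> * b x)"
    using a_def by (intro ext) simp
  have "{(x, \<xi>). \<xi> \<noteq> 0} = UNIV \<times> (- {0 :: real})" by auto
  then show "smooth2_on {(x, \<xi>). \<xi> \<noteq> 0} a"
    using smooth2_on_mult[OF b(1) smooth1_on_abs] unfolding a by metis
  show "\<forall>\<xi>. periodic2pi (\<lambda>x. a x \<xi>)" "pos_homogeneous 1 a"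
    using b(2) unfolding a periodic2pi_def pos_homogeneous_def by (simp_all add: abs_mult)
  show "\<forall>x \<xi>. \<xi> \<noteq> 0 \<longrightarrow> poisson (\<lambda>x \<xi>. \<xi> * X x) a x \<xi> \<ge> \<delta> * \<bar>\<xi>\<bar>"
  proof (intro allI impI)
    fix x \<xi> :: real
    assume "\<xi> \<noteq> 0"
    then show "poisson (\<lambda>x \<xi>. \<xi> * X x) a x \<xi> \<ge> \<delta> * \<bar>\<xi>\<bar>"
      using poisson_linear_abs[OF X b(3)] mult_left_mono[OF \<delta>, of "\<bar>\<xi>\<bar>" x]
      unfolding a by (simp add: mult.commute)
  qed
  show "\<forall>x \<xi>. b x \<le> -1/2 \<longrightarrow> a x \<xi> \<le> - \<bar>\<xi>\<bar> / 2"
  proof (intro allI impI)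
    fix x \<xi> :: real
    assume "b x \<le> -1/2"
    then have "\<bar>\<xi>\<bar> * b x \<le> \<bar>\<xi>\<bar> * (-1/2)"
      by (intro mult_left_mono) auto
    then show "a x \<xi> \<le> - \<bar>\<xi>\<bar> / 2"
      unfolding a_def by simp
  qed
qed

theorem mainTheorem16:
  fixes X :: "real \<Rightarrow> real"
  assumes smooth: "smooth1_on UNIV X"
    and per: "periodic2pi X"
    and has_zero: "\<exists>x0. X x0 = 0"
    and nondeg: "\<forall>x0. X x0 = 0 \<longrightarrow> deriv X x0 \<noteq> 0"
  shows "\<exists>(a :: real \<Rightarrow> real \<Rightarrow> real) (\<delta>::real).
           smooth2_on {(x, \<xi>). \<xi> \<noteq> 0} a \<and>
           (\<forall>\<xi>. periodic2pi (\<lambda>x. a x \<xi>)) \<and>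
           pos_homogeneous 1 a \<and>
           \<delta> > 0 \<and>
           (\<forall>x \<xi>. \<xi> \<noteq> 0 \<longrightarrow> poisson (\<lambda>x \<xi>. \<xi> * X x) a x \<xi> \<ge> \<delta> * \<bar>\<xi>\<bar>) \<and>
           (\<exists>W :: real set. open W \<and> W \<noteq> {} \<and>
              (\<forall>x\<in>W. \<forall>\<xi>. \<xi> \<noteq> 0 \<longrightarrow> a x \<xi> \<le> - \<bar>\<xi>\<bar> / 2))"
proof -
  obtain x0 where "X x0 = 0" using has_zero by blast
  moreover obtain x1 where "X x1 \<noteq> 0"
  proof (rule ccontr)
    assume "\<not> thesis"
    with that have "X = (\<lambda>_. 0)" by blast
    with nondeg \<open>X x0 = 0\<close> show False by simp
  qed
  ultimately obtain b b' \<delta> where b: "smooth1_on UNIV b" "periodic2pi b"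
      "\<And>x. (b has_field_derivative b' x) (at x)"
    and \<delta>: "0 < \<delta>" "\<And>x. \<delta> \<le> X x * b' x - deriv X x * b x" and "b x1 = -1"
    using exists_escape_profile[OF smooth per] nondeg by metis
  have X_differentiable: "X field_differentiable (at x)" for x
    using smooth1_on_UNIV_derivative[OF smooth] field_differentiable_def by metis
  define a where "a x \<xi> = \<bar>\<xi>\<bar> * b x" for x \<xi>
  note a = escape_function_abs_mult[OF a_def X_differentiable b \<delta>(2)]
  have "open {x. b x < -1/2}"
    by (intro open_Collect_less continuous_intros smooth1_on_UNIV_imp_continuous_on[OF b(1)])
  moreover have "{x. b x < -1/2} \<noteq> {}"
    using \<open>b x1 = -1\<close> by (auto intro!: exI[of _ x1])
  ultimately show ?thesis
    using a \<delta>(1) by (intro exI[of _ a] exI[of _ \<delta>] conjI exI[of _ "{x. b x < -1/2}"]) auto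
qed

end
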